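(* Let $d$ be an integer and $x>0$ a real number with $0\leqslant d-1\leqslant x/2$. Then $$\sum_{K_{d-1}-d+1<k\leqslant K_{d-1}}\Big(d^2\lfloor x/k\rfloor+\frac{2dx}{\lfloor x/k\rfloor}-x^2F(x/k)\Big)=\frac{8d^2-4d-1}{3}\sqrt{(d-1)x}+O(d^{7/2}x^{-1/2})+O(d^2),$$ where $k$ runs over integers, with absolute implied constants.
   Context: $\lfloor\cdot\rfloor$ denotes the integer part. For an integer $d\geqslant 0$ and real $x>0$, $K_d=K_d(x)=\big\lfloor \big(d+\sqrt{d^2+4dx}\,\big)/2\big\rfloor$. For real $t$, $F(t)=\sum_{n>t-1}\frac{1}{n^2(n+1)^2}$, summed over positive integers $n>t-1$. *)

theory Defs
  imports "HOL-Analysis.Analysis"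
begin

definition Kfun :: "int \<Rightarrow> real \<Rightarrow> int" where
  "Kfun d x = \<lfloor>(real_of_int d + sqrt ((real_of_int d)\<^sup>2 + 4 * real_of_int d * x)) / 2\<rfloor>"

definition Ffun :: "real \<Rightarrow> real" where
  "Ffun t = infsum (\<lambda>n::nat. 1 / ((real n)\<^sup>2 * (real n + 1)\<^sup>2)) {n. 1 \<le> n \<and> real n > t - 1}"

end

theory Submission imports Defs "HOL-Real_Asymp.Real_Asymp" begin

(*
  Write D = d - 1 and let r = (D + sqrt (D^2 + 4 D x)) / 2, the positive root of
  r (r - D) = D x, so that K_D(x) = floor r.  For the D integers k in (r - D, r] the
  quotient x / k lies in [rho, rho + 1) with rho = (r - D) / D, and s = sqrt (x / D) lies
  in [rho, rho + 1] as well; hence m = floor (x / k) satisfies |m - s| <= 2.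
  Telescoping 1/(n^2 (n+1)^2) = 1/(3 n^3) - 1/(3 (n+1)^3) - 1/(3 n^3 (n+1)^3) gives
  F(x / k) = 1/(3 m^3) + O(m^-5).  With x = D s^2, the main part d^2 m + 2 d x / m - x^2 / (3 m^3)
  of a summand has derivative ((D + 1) - D)^2 = 1 in m at m = s, where its value is
  s (8 d^2 - 4 d - 1) / 3; so each summand deviates from this value by O(1 + D^2 / s).
  Summing over the D summands turns D s into sqrt ((d - 1) x) and the error into
  O(d^2 + D^3 / s) = O(d^2 + d^(7/2) x^(-1/2)).
*)

lemma telescope_has_sum_atLeast:
  fixes w :: "nat \<Rightarrow> real"
  assumes lim: "w \<longlonglongrightarrow> 0" and decr: "\<And>n. M \<le> n \<Longrightarrow> w (Suc n) \<le> w n"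
  shows "((\<lambda>n. w n - w (Suc n)) has_sum w M) {M..}"
proof -
  have "(\<lambda>j. w (j + M) - w (Suc j + M)) sums w M"
    using telescope_sums'[OF LIMSEQ_ignore_initial_segment[OF lim, of M]] by simp
  then have "((\<lambda>j. w (j + M) - w (Suc j + M)) has_sum w M) UNIV"
    by (rule sums_nonneg_imp_has_sum) (simp add: decr)
  moreover have "{M..} = plus M ` UNIV"
    using image_add_atLeast[of M 0] by simp
  ultimately show ?thesis
    by (simp add: has_sum_reindex o_def add.commute)
qed

lemma Ffun_index_set:
  assumes "1 \<le> t"
  shows "{n. 1 \<le> n \<and> real n > t - 1} = {nat \<lfloor>t\<rfloor>..}"
  using assms by (auto simp: nat_le_iff) linarith+

lemma inverse_square_product_telescope:
  fixes n :: real
  assumes "n > 0"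
  shows "1 / (n\<^sup>2 * (n + 1)\<^sup>2) = (1 / (3 * n^3) - 1 / (3 * (n + 1)^3)) - 1 / (3 * n^3 * (n + 1)^3)"
  using assms by (simp add: field_simps) algebra

lemma inverse_cube_product_le:
  fixes n :: real
  assumes "1 \<le> n"
  shows "1 / (3 * n^3 * (n + 1)^3) \<le> 4/15 * (1 / n^5 - 1 / (n + 1)^5)"
proof -
  have n0: "0 < n"
    using assms by simp
  have "(n + 1)^5 = n^5 + 5 * n^4 + 10 * n^3 + 10 * n^2 + 5 * n + 1"
    by algebra
  then have "5 * n^4 \<le> (n + 1)^5 - n^5"
    using n0 by simp
  have "5 / (n * (n + 1)^5) = 5 * n^4 / (n^5 * (n + 1)^5)"
    using n0 by (simp add: power_numeral_reduce)
  also have "\<dots> \<le> ((n + 1)^5 - n^5) / (n^5 * (n + 1)^5)"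
    using \<open>5 * n^4 \<le> (n + 1)^5 - n^5\<close> n0 by (intro divide_right_mono) auto
  also have "\<dots> = 1 / n^5 - 1 / (n + 1)^5"
    using n0 by (simp add: diff_divide_distrib)
  finally have diff: "5 / (n * (n + 1)^5) \<le> 1 / n^5 - 1 / (n + 1)^5" .
  have "(n + 1)\<^sup>2 \<le> (2 * n)\<^sup>2"
    using assms by (intro power_mono) auto
  then have "1 / (3 * n^3 * (n + 1)^3) \<le> 4 / (3 * n * (n + 1)^5)"
    using n0 by (simp add: divide_simps power_numeral_reduce)
  also have "\<dots> = 4/15 * (5 / (n * (n + 1)^5))"
    by simp
  also have "\<dots> \<le> 4/15 * (1 / n^5 - 1 / (n + 1)^5)"
    using diff by (rule mult_left_mono) simp
  finally show ?thesis .
qed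

lemma Ffun_bounds:
  assumes "1 \<le> t"
  defines "m \<equiv> real_of_int \<lfloor>t\<rfloor>"
  shows "Ffun t \<le> 1 / (3 * m^3)" and "1 / (3 * m^3) - 4 / (15 * m^5) \<le> Ffun t"
proof -
  define M where "M = nat \<lfloor>t\<rfloor>"
  have M1: "1 \<le> M" and Mm: "real M = m"
    using assms by (auto simp: M_def m_def le_nat_iff)
  define u :: "nat \<Rightarrow> real" where "u n = 1 / (3 * real n ^ 3)" for n
  define v :: "nat \<Rightarrow> real" where "v n = 1 / real n ^ 5" for n
  define b :: "nat \<Rightarrow> real" where "b n = 1 / (3 * real n ^ 3 * (real n + 1) ^ 3)" for n
  have real_Suc: "real (Suc n) = real n + 1" for n
    by simp
  have u_has_sum: "((\<lambda>n. u n - u (Suc n)) has_sum u M) {M..}"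
  proof (rule telescope_has_sum_atLeast)
    show "u \<longlonglongrightarrow> 0"
      unfolding u_def by real_asymp
    show "u (Suc n) \<le> u n" if "M \<le> n" for n
      unfolding u_def using that M1 by (intro divide_left_mono mult_left_mono power_mono) auto
  qed
  have v_has_sum: "((\<lambda>n. 4/15 * (v n - v (Suc n))) has_sum (4/15 * v M)) {M..}"
  proof (intro has_sum_cmult_right telescope_has_sum_atLeast)
    show "v \<longlonglongrightarrow> 0"
      unfolding v_def by real_asymp
    show "v (Suc n) \<le> v n" if "M \<le> n" for n
      unfolding v_def using that M1 by (intro divide_left_mono power_mono) auto
  qed
  have b_nonneg: "0 \<le> b n" for n
    by (simp add: b_def)
  have b_le: "b n \<le> 4/15 * (v n - v (Suc n))" if "n \<in> {M..}" for n
    unfolding b_def v_def real_Suc using that M1 by (intro inverse_cube_product_le) auto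
  have b_summable: "b summable_on {M..}"
    by (rule summable_on_comparison_test[OF has_sum_imp_summable[OF v_has_sum] b_le b_nonneg])
  have "((\<lambda>n. (u n - u (Suc n)) + - b n) has_sum (u M + - infsum b {M..})) {M..}"
    by (rule has_sum_add[OF u_has_sum]) (simp add: has_sum_uminus b_summable)
  moreover have "1 / ((real n)\<^sup>2 * (real n + 1)\<^sup>2) = (u n - u (Suc n)) + - b n" if "n \<in> {M..}" for n
    unfolding u_def b_def real_Suc using that M1 inverse_square_product_telescope[of "real n"] by simp
  ultimately have "((\<lambda>n. 1 / ((real n)\<^sup>2 * (real n + 1)\<^sup>2)) has_sum (u M - infsum b {M..})) {M..}"
    using has_sum_cong[of "{M..}" "\<lambda>n. 1 / ((real n)\<^sup>2 * (real n + 1)\<^sup>2)"] by simp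
  then have "Ffun t = u M - infsum b {M..}"
    unfolding Ffun_def Ffun_index_set[OF assms(1)] M_def[symmetric] by (rule infsumI)
  moreover have "0 \<le> infsum b {M..}"
    by (simp add: b_nonneg infsum_nonneg)
  moreover have "infsum b {M..} \<le> 4/15 * v M"
    using has_sum_infsum[OF b_summable] v_has_sum b_le by (rule has_sum_mono)
  ultimately show "Ffun t \<le> 1 / (3 * m^3)" and "1 / (3 * m^3) - 4 / (15 * m^5) \<le> Ffun t"
    by (simp_all add: u_def v_def Mm)
qed

lemma summand_expansion:
  fixes D s m :: real
  assumes "m \<noteq> 0"
  shows "(D + 1)\<^sup>2 * m + 2 * (D + 1) * (D * s\<^sup>2) / m - (D * s\<^sup>2)\<^sup>2 / (3 * m^3)
    = s * ((D + 1)\<^sup>2 + 2 * (D + 1) * D - D\<^sup>2 / 3)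
      + ((m - s) + 2 * D * (m - s)\<^sup>2 / m + D\<^sup>2 * (m - s)^3 * (s + 3 * m) / (3 * m^3))"
  using assms by (simp add: field_simps) algebra

lemma expansion_remainder_bound:
  fixes D s m :: real
  assumes D: "1 \<le> D" and s: "1 \<le> s" and m: "1 \<le> m"
    and close: "\<bar>m - s\<bar> \<le> 2" and s_le: "s \<le> 3 * m"
  shows "\<bar>(m - s) + 2 * D * (m - s)\<^sup>2 / m + D\<^sup>2 * (m - s)^3 * (s + 3 * m) / (3 * m^3)\<bar>
    \<le> 2 + 168 * D\<^sup>2 / s"
proof -
  define e where "e = m - s"
  have e2: "e\<^sup>2 \<le> 4" and e3: "\<bar>e\<bar>^3 \<le> 8"
    using power_mono[OF close, of 2] power_mono[OF close, of 3] by (simp_all add: e_def power2_abs)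
  have inv_m: "1 / m \<le> 3 / s"
    using s_le s m by (simp add: divide_simps)
  have "\<bar>2 * D * e\<^sup>2 / m\<bar> = 2 * D * e\<^sup>2 * (1 / m)"
    using D m by simp
  also have "\<dots> \<le> 2 * D * 4 * (3 / s)"
    using D e2 inv_m m by (intro mult_mono) auto
  also have "\<dots> \<le> 24 * D\<^sup>2 / s"
    using D s by (simp add: divide_right_mono power2_eq_square)
  finally have quadratic: "\<bar>2 * D * e\<^sup>2 / m\<bar> \<le> 24 * D\<^sup>2 / s" .
  have "\<bar>D\<^sup>2 * e^3 * (s + 3 * m) / (3 * m^3)\<bar> = D\<^sup>2 * \<bar>e\<bar>^3 * (s + 3 * m) / (3 * m^3)"
    using s m by (simp add: abs_mult power_abs)
  also have "\<dots> \<le> D\<^sup>2 * 8 * (6 * m) / (3 * m^3)"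
    using e3 s_le s m by (intro divide_right_mono mult_mono) auto
  also have "\<dots> = 16 * D\<^sup>2 * (1 / m)\<^sup>2"
    using m by (simp add: field_simps power_numeral_reduce)
  also have "\<dots> \<le> 16 * D\<^sup>2 * (3 / s)\<^sup>2"
    using inv_m m by (intro mult_left_mono power_mono) auto
  also have "\<dots> = 144 * D\<^sup>2 / s\<^sup>2"
    by (simp add: power_divide)
  also have "\<dots> \<le> 144 * D\<^sup>2 / s"
    using s by (intro divide_left_mono) (auto simp: power2_eq_square)
  finally have cubic: "\<bar>D\<^sup>2 * e^3 * (s + 3 * m) / (3 * m^3)\<bar> \<le> 144 * D\<^sup>2 / s" .
  have "\<bar>e\<bar> \<le> 2"
    using close by (simp add: e_def)
  with quadratic cubic show ?thesis
    unfolding e_def[symmetric] by linarith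
qed

lemma Ffun_tail_error_bound:
  fixes D s t :: real
  assumes s: "1 \<le> s" and t: "1 \<le> t" and s_le: "s \<le> 3 * \<lfloor>t\<rfloor>"
  defines "m \<equiv> real_of_int \<lfloor>t\<rfloor>"
  shows "0 \<le> (D * s\<^sup>2)\<^sup>2 * (1 / (3 * m^3) - Ffun t)"
    and "(D * s\<^sup>2)\<^sup>2 * (1 / (3 * m^3) - Ffun t) \<le> 65 * D\<^sup>2 / s"
proof -
  have m: "1 \<le> m"
    using t by (simp add: m_def)
  show "0 \<le> (D * s\<^sup>2)\<^sup>2 * (1 / (3 * m^3) - Ffun t)"
    using Ffun_bounds(1)[OF t] by (simp add: m_def)
  have "s^5 \<le> (3 * m)^5"
    using s_le s by (intro power_mono) (auto simp: m_def)
  then have s_m: "s^4 / m^5 \<le> 243 / s"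
    using s m by (simp add: divide_simps power_numeral_reduce)
  have "(D * s\<^sup>2)\<^sup>2 * (1 / (3 * m^3) - Ffun t) \<le> (D * s\<^sup>2)\<^sup>2 * (4 / (15 * m^5))"
    using Ffun_bounds(2)[OF t] by (intro mult_left_mono) (auto simp: m_def)
  also have "\<dots> = 4/15 * D\<^sup>2 * (s^4 / m^5)"
    by (simp add: power_mult_distrib power2_eq_square power_numeral_reduce)
  also have "\<dots> \<le> 4/15 * D\<^sup>2 * (243 / s)"
    using s_m by (intro mult_left_mono) auto
  also have "\<dots> \<le> 65 * D\<^sup>2 / s"
    using s by (simp add: divide_simps)
  finally show "(D * s\<^sup>2)\<^sup>2 * (1 / (3 * m^3) - Ffun t) \<le> 65 * D\<^sup>2 / s" .
qed

lemma Kfun_window: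
  fixes D :: int and x :: real
  assumes D: "1 \<le> D" and x: "2 * D \<le> x"
  obtains \<rho> where "1 \<le> \<rho>" "\<rho> \<le> sqrt (x / D)" "sqrt (x / D) \<le> \<rho> + 1"
    and "\<And>k. k \<in> {Kfun D x - D<..Kfun D x} \<Longrightarrow> \<rho> \<le> x / k \<and> x / k < \<rho> + 1"
proof -
  define \<delta> where "\<delta> = real_of_int D"
  have \<delta>: "1 \<le> \<delta>" "2 * \<delta> \<le> x"
    using D x by (simp_all add: \<delta>_def)
  define q where "q = sqrt (\<delta>\<^sup>2 + 4 * \<delta> * x)"
  define r where "r = (\<delta> + q) / 2"
  have K_eq: "Kfun D x = \<lfloor>r\<rfloor>"
    by (simp add: Kfun_def r_def q_def \<delta>_def)
  have "q\<^sup>2 = \<delta>\<^sup>2 + 4 * \<delta> * x"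
    using \<delta> by (simp add: q_def)
  then have root: "r * (r - \<delta>) = \<delta> * x"
    by (simp add: r_def field_simps power2_eq_square)
  have "4 * \<delta> * (2 * \<delta>) \<le> 4 * \<delta> * x"
    using \<delta> by (intro mult_left_mono) auto
  then have "3 * \<delta> \<le> q"
    unfolding q_def by (intro real_le_rsqrt) (simp add: power2_eq_square algebra_simps)
  then have r_ge: "2 * \<delta> \<le> r"
    using \<delta> by (simp add: r_def)
  show ?thesis
  proof
    show "1 \<le> (r - \<delta>) / \<delta>"
      using r_ge \<delta> by (simp add: field_simps)
    have "((r - \<delta>) / \<delta>)\<^sup>2 \<le> x / \<delta>"
      using root r_ge \<delta> by (simp add: power2_eq_square field_simps mult_right_mono)
    then show "(r - \<delta>) / \<delta> \<le> sqrt (x / D)"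
      by (simp add: \<delta>_def real_le_rsqrt)
    have "x / \<delta> \<le> (r / \<delta>)\<^sup>2"
      using root r_ge \<delta> by (simp add: power2_eq_square field_simps mult_left_mono)
    then have "sqrt (x / \<delta>) \<le> r / \<delta>"
      using r_ge \<delta> by (simp add: real_sqrt_le_iff')
    then show "sqrt (x / D) \<le> (r - \<delta>) / \<delta> + 1"
      using \<delta> by (simp add: \<delta>_def diff_divide_distrib)
  next
    fix k assume "k \<in> {Kfun D x - D<..Kfun D x}"
    then have k: "r - \<delta> < k" "k \<le> r"
      unfolding K_eq \<delta>_def by (simp_all add: le_floor_iff) linarith
    have k0: "0 < real_of_int k"
      using k r_ge \<delta> by linarith
    have "(r - \<delta>) / \<delta> = x / r"
      using root r_ge \<delta> by (simp add: field_simps)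
    also have "\<dots> \<le> x / k"
      using k k0 \<delta> by (intro divide_left_mono) auto
    finally have "(r - \<delta>) / \<delta> \<le> x / k" .
    have "x / k < x / (r - \<delta>)"
      using k k0 \<delta> r_ge by (intro divide_strict_left_mono) auto
    also have "\<dots> = (r - \<delta>) / \<delta> + 1"
      using root r_ge \<delta> by (simp add: field_simps)
    finally show "(r - \<delta>) / \<delta> \<le> x / k \<and> x / k < (r - \<delta>) / \<delta> + 1"
      using \<open>(r - \<delta>) / \<delta> \<le> x / k\<close> by simp
  qed
qed

lemma summand_deviation_bound:
  fixes D k :: int and x \<delta> s m :: real
  assumes D: "1 \<le> D" and x: "2 * D \<le> x" and k: "k \<in> {Kfun D x - D<..Kfun D x}"
  defines "\<delta> \<equiv> real_of_int D" and "s \<equiv> sqrt (x / \<delta>)" and "m \<equiv> real_of_int \<lfloor>x / k\<rfloor>"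
  shows "\<bar>(\<delta> + 1)\<^sup>2 * m + 2 * (\<delta> + 1) * x / m - x\<^sup>2 * Ffun (x / k)
           - s * ((\<delta> + 1)\<^sup>2 + 2 * (\<delta> + 1) * \<delta> - \<delta>\<^sup>2 / 3)\<bar> \<le> 2 + 233 * \<delta>\<^sup>2 / s"
proof -
  obtain \<rho> where \<rho>: "1 \<le> \<rho>" "\<rho> \<le> s" "s \<le> \<rho> + 1" "\<rho> \<le> x / k" "x / k < \<rho> + 1"
    using Kfun_window[OF D x] k unfolding s_def \<delta>_def by metis
  have t: "1 \<le> x / k"
    using \<rho> by linarith
  have m: "m \<le> x / k" "x / k < m + 1"
    unfolding m_def by linarith+
  have m1: "1 \<le> m"
    using t by (simp add: m_def)
  have \<delta>1: "1 \<le> \<delta>"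
    using D by (simp add: \<delta>_def)
  have s1: "1 \<le> s" and close: "\<bar>m - s\<bar> \<le> 2" and s_le: "s \<le> 3 * m"
    using \<rho> m m1 by linarith+
  have x_eq: "x = \<delta> * s\<^sup>2"
    using \<delta>1 x by (simp add: s_def \<delta>_def)
  have remainder: "\<bar>(m - s) + 2 * \<delta> * (m - s)\<^sup>2 / m + \<delta>\<^sup>2 * (m - s)^3 * (s + 3 * m) / (3 * m^3)\<bar>
      \<le> 2 + 168 * \<delta>\<^sup>2 / s"
    by (rule expansion_remainder_bound[OF \<delta>1 s1 m1 close s_le])
  have "0 \<le> x\<^sup>2 * (1 / (3 * m^3) - Ffun (x / k))"
    and "x\<^sup>2 * (1 / (3 * m^3) - Ffun (x / k)) \<le> 65 * \<delta>\<^sup>2 / s"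
    using Ffun_tail_error_bound[OF s1 t] s_le x_eq by (simp_all add: m_def)
  then have tail: "0 \<le> x\<^sup>2 / (3 * m^3) - x\<^sup>2 * Ffun (x / k)"
    "x\<^sup>2 / (3 * m^3) - x\<^sup>2 * Ffun (x / k) \<le> 65 * \<delta>\<^sup>2 / s"
    by (simp_all add: right_diff_distrib)
  have "168 * \<delta>\<^sup>2 / s + 65 * \<delta>\<^sup>2 / s = 233 * \<delta>\<^sup>2 / s"
    by (simp add: add_divide_distrib[symmetric])
  moreover have "(\<delta> + 1)\<^sup>2 * m + 2 * (\<delta> + 1) * x / m - x\<^sup>2 / (3 * m^3)
      = s * ((\<delta> + 1)\<^sup>2 + 2 * (\<delta> + 1) * \<delta> - \<delta>\<^sup>2 / 3)
        + ((m - s) + 2 * \<delta> * (m - s)\<^sup>2 / m + \<delta>\<^sup>2 * (m - s)^3 * (s + 3 * m) / (3 * m^3))"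
    using summand_expansion[of m \<delta> s, folded x_eq] m1 by simp
  ultimately show ?thesis
    using remainder tail unfolding abs_le_iff by linarith
qed

lemma deviation_le_powr:
  fixes D x :: real
  assumes D: "0 \<le> D" and x: "0 < x"
  shows "D * (2 + 233 * D\<^sup>2 / sqrt (x / D))
    \<le> 233 * (D + 1) powr (7/2) * x powr (-1/2) + 2 * (D + 1)\<^sup>2"
proof -
  have "D * (233 * D\<^sup>2 / sqrt (x / D)) = 233 * (D^3 * sqrt D) * (1 / sqrt x)"
    using D x by (simp add: real_sqrt_divide field_simps power_numeral_reduce)
  also have "\<dots> \<le> 233 * ((D + 1)^3 * sqrt (D + 1)) * (1 / sqrt x)"
    using D x by (intro mult_right_mono mult_left_mono mult_mono power_mono) auto
  also have "(D + 1)^3 * sqrt (D + 1) = (D + 1) powr 3 * (D + 1) powr (1/2)"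
    using D by (simp add: powr_half_sqrt powr_realpow)
  also have "\<dots> = (D + 1) powr (7/2)"
    by (simp add: powr_add[symmetric])
  also have "1 / sqrt x = x powr (-1/2)"
    using x by (simp add: powr_minus_divide powr_half_sqrt)
  finally have "D * (233 * D\<^sup>2 / sqrt (x / D)) \<le> 233 * (D + 1) powr (7/2) * x powr (-1/2)" .
  moreover have "2 * D \<le> 2 * (D + 1)\<^sup>2"
    using D by (simp add: power2_eq_square algebra_simps)
  ultimately show ?thesis
    by (simp add: distrib_left)
qed

lemma window_sum_bound:
  fixes d :: int and x :: real
  assumes x: "0 < x" and d: "0 \<le> d - 1" and dx: "real_of_int (d - 1) \<le> x / 2"
  shows "\<bar>(\<Sum>k\<in>{Kfun (d - 1) x - d + 1<..Kfun (d - 1) x}.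
            (real_of_int d)\<^sup>2 * real_of_int \<lfloor>x / real_of_int k\<rfloor>
            + 2 * real_of_int d * x / real_of_int \<lfloor>x / real_of_int k\<rfloor>
            - x\<^sup>2 * Ffun (x / real_of_int k))
          - (8 * (real_of_int d)\<^sup>2 - 4 * real_of_int d - 1) / 3 * sqrt (real_of_int (d - 1) * x)\<bar>
    \<le> 233 * real_of_int d powr (7/2) * x powr (-1/2) + 2 * (real_of_int d)\<^sup>2"
proof -
  define D where "D = real_of_int (d - 1)"
  define I where "I = {Kfun (d - 1) x - d + 1<..Kfun (d - 1) x}"
  define s where "s = sqrt (x / D)"
  define T where "T k = (real_of_int d)\<^sup>2 * real_of_int \<lfloor>x / real_of_int k\<rfloor>
            + 2 * real_of_int d * x / real_of_int \<lfloor>x / real_of_int k\<rfloor>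
            - x\<^sup>2 * Ffun (x / real_of_int k)" for k
  define c where "c = (8 * (real_of_int d)\<^sup>2 - 4 * real_of_int d - 1) / 3"
  have D: "0 \<le> D" and x2D: "2 * (d - 1) \<le> x"
    using d dx by (simp_all add: D_def)
  have card_I: "real (card I) = D"
    using d by (simp add: I_def D_def)
  have sqrt_eq: "sqrt (D * x) = D * s"
  proof (cases "D = 0")
    case False
    then have "sqrt (D * x) = sqrt (D\<^sup>2 * (x / D))"
      by (simp add: power2_eq_square)
    also have "\<dots> = D * s"
      unfolding real_sqrt_mult s_def using d by (simp add: D_def)
    finally show ?thesis .
  qed simp
  have d_eq: "D + 1 = real_of_int d"
    by (simp add: D_def)
  have coef: "(real_of_int d)\<^sup>2 + 2 * real_of_int d * D - D\<^sup>2 / 3 = c"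
    by (simp add: c_def D_def field_simps power2_eq_square)
  have summand: "\<bar>T k - s * c\<bar> \<le> 2 + 233 * D\<^sup>2 / s" if k: "k \<in> I" for k
  proof -
    have "1 \<le> d - 1" and "k \<in> {Kfun (d - 1) x - (d - 1)<..Kfun (d - 1) x}"
      using k by (auto simp: I_def)
    from summand_deviation_bound[OF this(1) x2D this(2)]
    show ?thesis
      unfolding T_def by (simp only: D_def[symmetric] s_def[symmetric] d_eq coef)
  qed
  have "\<bar>(\<Sum>k\<in>I. T k) - c * (D * s)\<bar> = \<bar>\<Sum>k\<in>I. (T k - s * c)\<bar>"
    by (simp add: sum_subtractf card_I mult_ac)
  also have "\<dots> \<le> (\<Sum>k\<in>I. 2 + 233 * D\<^sup>2 / s)"
    using summand by (intro order.trans[OF sum_abs sum_mono])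
  also have "\<dots> = D * (2 + 233 * D\<^sup>2 / s)"
    by (simp add: card_I)
  also have "\<dots> \<le> 233 * real_of_int d powr (7/2) * x powr (-1/2) + 2 * (real_of_int d)\<^sup>2"
    using deviation_le_powr[OF D x] unfolding s_def d_eq .
  finally show ?thesis
    unfolding I_def[symmetric] D_def[symmetric] sqrt_eq T_def[symmetric] c_def[symmetric] s_def[symmetric] .
qed

theorem proposition9:
  "\<exists>C1 C2::real. \<forall>(d::int) (x::real).
     x > 0 \<and> 0 \<le> d - 1 \<and> real_of_int (d - 1) \<le> x / 2 \<longrightarrow>
     \<bar>(\<Sum>k\<in>{Kfun (d - 1) x - d + 1<..Kfun (d - 1) x}.
          (real_of_int d)\<^sup>2 * real_of_int \<lfloor>x / real_of_int k\<rfloor>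
          + 2 * real_of_int d * x / real_of_int \<lfloor>x / real_of_int k\<rfloor>
          - x\<^sup>2 * Ffun (x / real_of_int k))
       - (8 * (real_of_int d)\<^sup>2 - 4 * real_of_int d - 1) / 3 * sqrt (real_of_int (d - 1) * x)\<bar>
     \<le> C1 * real_of_int d powr (7/2) * x powr (-1/2) + C2 * (real_of_int d)\<^sup>2"
  by (rule exI[of _ 233], rule exI[of _ 2]) (blast intro: window_sum_bound)

end
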